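(* Let $\vec G$ and $\vec H$ be oriented graphs. Then $\vec G$ and $\vec H$ are push-equivalent (i.e. $\vec H$ can be obtained from $\vec G$ by pushing some set of vertices, up to isomorphism) if and only if their anti-twinned graphs $R(\vec G)$ and $R(\vec H)$ are isomorphic as oriented graphs.
   Context: An oriented graph is a directed graph with no loops and no pair of opposite arcs. To push a vertex $v$ of an oriented graph means to reverse the orientation of every arc incident with $v$. Two oriented graphs are push-equivalent if one can be obtained from the other by pushing some set of vertices; this is an equivalence relation, and the equivalence class $[\vec G]$ of $\vec G$ is called a push graph; its elements are called presentations of $[\vec G]$. Given an oriented graph $\vec G$ with vertex set $\{v_1,\dots,v_k\}$, its anti-twinned graph $R(\vec G)$ is the oriented graph with vertex set $\{v_1,\dots,v_k\}\cup\{v_1',\dots,v_k'\}$ (where $v_i'$ are new vertices) and arc set $\{v_iv_j,\ v_i'v_j',\ v_jv_i',\ v_j'v_i : v_iv_j \text{ an arc of } \vec G\}$. (Up to isomorphism $R(\vec G)$ does not depend on which presentation of $[\vec G]$ is used.) An isomorphism of oriented graphs is a bijection $h$ on vertices such that $xy$ is an arc iff $h(x)h(y)$ is an arc. *)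

theory Defs
  imports Main
begin

definition oriented_graph :: "'a set \<Rightarrow> ('a \<times> 'a) set \<Rightarrow> bool" where
  "oriented_graph V A \<longleftrightarrow> A \<subseteq> V \<times> V \<and> (\<forall>x. (x, x) \<notin> A)
     \<and> (\<forall>x y. (x, y) \<in> A \<longrightarrow> (y, x) \<notin> A)"

definition push :: "'a \<Rightarrow> ('a \<times> 'a) set \<Rightarrow> ('a \<times> 'a) set" where
  "push v A = {(x, y). ((x, y) \<in> A \<and> x \<noteq> v \<and> y \<noteq> v) \<or> ((y, x) \<in> A \<and> (x = v \<or> y = v))}"

definition push_related :: "'a set \<Rightarrow> ('a \<times> 'a) set \<Rightarrow> ('a \<times> 'a) set \<Rightarrow> bool" where
  "push_related V A B \<longleftrightarrow> (\<lambda>X Y. \<exists>v\<in>V. Y = push v X)\<^sup>*\<^sup>* A B"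

definition is_iso :: "'a set \<Rightarrow> ('a \<times> 'a) set \<Rightarrow> 'b set \<Rightarrow> ('b \<times> 'b) set \<Rightarrow> ('a \<Rightarrow> 'b) \<Rightarrow> bool" where
  "is_iso V A W B h \<longleftrightarrow> bij_betw h V W \<and>
     (\<forall>x\<in>V. \<forall>y\<in>V. (x, y) \<in> A \<longleftrightarrow> (h x, h y) \<in> B)"

definition isomorphic :: "'a set \<Rightarrow> ('a \<times> 'a) set \<Rightarrow> 'b set \<Rightarrow> ('b \<times> 'b) set \<Rightarrow> bool" where
  "isomorphic V A W B \<longleftrightarrow> (\<exists>h. is_iso V A W B h)"

definition push_equivalent :: "'a set \<Rightarrow> ('a \<times> 'a) set \<Rightarrow> 'b set \<Rightarrow> ('b \<times> 'b) set \<Rightarrow> bool" where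
  "push_equivalent V A W B \<longleftrightarrow> (\<exists>A'. push_related V A A' \<and> isomorphic V A' W B)"

text \<open>Anti-twinned graph: vertex (v, True) stands for v, (v, False) for its twin v'.\<close>
definition anti_twin_vertices :: "'a set \<Rightarrow> ('a \<times> bool) set" where
  "anti_twin_vertices V = V \<times> UNIV"

definition anti_twin_arcs :: "('a \<times> 'a) set \<Rightarrow> (('a \<times> bool) \<times> ('a \<times> bool)) set" where
  "anti_twin_arcs A = (\<Union>(u, v)\<in>A.
      {((u, True), (v, True)), ((u, False), (v, False)),
       ((v, True), (u, False)), ((v, False), (u, True))})"

end

theory Submission
  imports Defs
begin

text \<open>Pushing v is realised in R(G) by exchanging v and its twin v', so push-equivalent graphs
  have isomorphic anti-twinned graphs. Conversely, an isomorphism R(G) \<rightarrow> R(H) that commutes with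
  the twin map has the form (x, b) \<mapsto> (h x, b \<noteq> x \<in> S), and then h is an isomorphism from G pushed
  at S onto H. An arbitrary isomorphism f only commutes with the twin map up to vertices with the
  same in- and out-neighbourhoods; as arcs depend only on neighbourhoods, f may be modified inside
  neighbourhood classes. Since G is oriented, a non-isolated vertex never shares its neighbourhoods
  with its own twin, so the classes of non-isolated vertices come in pairs C, C'; choosing one
  side of each pair, keeping f there and mirroring it on the other side gives an isomorphism
  commuting with the twin map. Isolated vertices are matched by counting.\<close>

lemma anti_twin_arcs_iff:
  "((x, b), (y, c)) \<in> anti_twin_arcs A \<longleftrightarrow> (if b = c then (x, y) \<in> A else (y, x) \<in> A)"
  by (cases b; cases c; auto simp: anti_twin_arcs_def)

lemma push_iff:
  "(x, y) \<in> push v A \<longleftrightarrow> (if x = v \<or> y = v then (y, x) \<in> A else (x, y) \<in> A)"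
  by (auto simp: push_def)

lemma is_iso_id: "is_iso V A V A id"
  by (simp add: is_iso_def)

lemma is_iso_comp:
  assumes "is_iso U E U' E' f" and "is_iso U' E' U'' E'' g"
  shows "is_iso U E U'' E'' (g \<circ> f)"
  using assms unfolding is_iso_def by (metis bij_betw_trans bij_betw_apply comp_apply)

definition twin :: "'a \<times> bool \<Rightarrow> 'a \<times> bool" where
  "twin p = (fst p, \<not> snd p)"

lemma twin_twin [simp]: "twin (twin p) = p"
  by (simp add: twin_def)

definition swap_twins :: "'a \<Rightarrow> 'a \<times> bool \<Rightarrow> 'a \<times> bool" where
  "swap_twins v p = (if fst p = v then twin p else p)"

lemma is_iso_swap_twins_push:
  "is_iso (anti_twin_vertices V) (anti_twin_arcs A)
          (anti_twin_vertices V) (anti_twin_arcs (push v A)) (swap_twins v)"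
proof -
  have "bij_betw (swap_twins v) (anti_twin_vertices V) (anti_twin_vertices V)"
    by (rule bij_betw_byWitness[where f' = "swap_twins v"])
      (auto simp: swap_twins_def twin_def anti_twin_vertices_def)
  moreover have "(p, q) \<in> anti_twin_arcs A \<longleftrightarrow>
      (swap_twins v p, swap_twins v q) \<in> anti_twin_arcs (push v A)" for p q
    by (cases p; cases q) (auto simp: swap_twins_def twin_def anti_twin_arcs_iff push_iff)
  ultimately show ?thesis
    by (simp add: is_iso_def)
qed

lemma isomorphic_anti_twin_if_push_related:
  assumes "push_related V A A'"
  shows "isomorphic (anti_twin_vertices V) (anti_twin_arcs A)
                    (anti_twin_vertices V) (anti_twin_arcs A')"
  using assms unfolding push_related_def
proof (induction rule: rtranclp_induct)
  case base
  show ?case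
    using is_iso_id by (auto simp: isomorphic_def)
next
  case (step A' A'')
  then obtain v where "A'' = push v A'"
    by blast
  with step.IH is_iso_comp[OF _ is_iso_swap_twins_push] show ?case
    by (metis isomorphic_def)
qed

lemma is_iso_anti_twin:
  assumes "is_iso V A W B h"
  shows "is_iso (anti_twin_vertices V) (anti_twin_arcs A)
                (anti_twin_vertices W) (anti_twin_arcs B) (map_prod h id)"
proof -
  have "bij_betw (map_prod h id) (V \<times> UNIV) (W \<times> UNIV)"
    using assms by (intro bij_betw_map_prod) (auto simp: is_iso_def)
  moreover have "((x, b), (y, c)) \<in> anti_twin_arcs A \<longleftrightarrow>
      ((h x, b), (h y, c)) \<in> anti_twin_arcs B" if "x \<in> V" "y \<in> V" for x y b c
    using assms that by (auto simp: is_iso_def anti_twin_arcs_iff)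
  ultimately show ?thesis
    by (auto simp: is_iso_def anti_twin_vertices_def)
qed

lemma isomorphic_anti_twin_if_push_equivalent:
  assumes "push_equivalent V A W B"
  shows "isomorphic (anti_twin_vertices V) (anti_twin_arcs A)
                    (anti_twin_vertices W) (anti_twin_arcs B)"
proof -
  obtain A' h where "push_related V A A'" and "is_iso V A' W B h"
    using assms by (auto simp: push_equivalent_def isomorphic_def)
  with isomorphic_anti_twin_if_push_related is_iso_comp[OF _ is_iso_anti_twin] show ?thesis
    by (metis isomorphic_def)
qed

definition push_set :: "'a set \<Rightarrow> ('a \<times> 'a) set \<Rightarrow> ('a \<times> 'a) set" where
  "push_set S A = {(x, y). if (x \<in> S) = (y \<in> S) then (x, y) \<in> A else (y, x) \<in> A}"

lemma push_set_insert:
  assumes "v \<notin> S"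
  shows "push_set (insert v S) A = push v (push_set S A)"
  using assms by (auto simp: push_set_def push_iff split: if_splits)

lemma push_related_push_set:
  assumes "finite S" and "S \<subseteq> V"
  shows "push_related V A (push_set S A)"
  using assms
proof (induction S rule: finite_induct)
  case empty
  have "push_set {} A = A"
    by (auto simp: push_set_def)
  then show ?case
    by (simp add: push_related_def)
next
  case (insert v S)
  then show ?case
    unfolding push_related_def push_set_insert[OF insert.hyps(2)]
    by (auto intro: rtranclp.rtrancl_into_rtrancl)
qed

lemma push_equivalent_if_twin_compatible_iso:
  assumes "finite V"
    and iso: "is_iso (anti_twin_vertices V) (anti_twin_arcs A)
                     (anti_twin_vertices W) (anti_twin_arcs B) g"
    and twin_compat: "\<And>p. g (twin p) = twin (g p)"
  shows "push_equivalent V A W B"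
proof -
  define h where "h x = fst (g (x, True))" for x
  define S where "S = {x \<in> V. \<not> snd (g (x, True))}"
  have g_bij: "bij_betw g (V \<times> UNIV) (W \<times> UNIV)"
    and g_arc: "\<And>p q. p \<in> V \<times> UNIV \<Longrightarrow> q \<in> V \<times> UNIV \<Longrightarrow>
                  (p, q) \<in> anti_twin_arcs A \<longleftrightarrow> (g p, g q) \<in> anti_twin_arcs B"
    using iso by (auto simp: is_iso_def anti_twin_vertices_def)
  have g_eq: "g (x, b) = (h x, b \<noteq> (x \<in> S))" if "x \<in> V" for x b
  proof (cases b)
    case False
    have "g (x, False) = twin (g (x, True))"
      using twin_compat[of "(x, True)"] by (simp add: twin_def)
    with False that show ?thesis
      by (simp add: h_def S_def twin_def)
  qed (use that in \<open>simp add: h_def S_def prod_eq_iff\<close>)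
  have "bij_betw h V W"
  proof (rule bij_betw_imageI)
    show "inj_on h V"
    proof (rule inj_onI)
      fix x y assume "x \<in> V" "y \<in> V" "h x = h y"
      then have "g (x, x \<notin> S) = g (y, y \<notin> S)"
        by (simp add: g_eq)
      with \<open>x \<in> V\<close> \<open>y \<in> V\<close> g_bij show "x = y"
        by (auto dest: bij_betw_imp_inj_on inj_onD)
    qed
    show "h ` V = W"
    proof
      show "h ` V \<subseteq> W"
        using g_bij by (auto simp: h_def dest!: bij_betw_apply[where a = "(_, True)"])
      show "W \<subseteq> h ` V"
      proof
        fix w assume "w \<in> W"
        then obtain x b where "x \<in> V" "g (x, b) = (w, True)"
          using g_bij \<open>w \<in> W\<close> unfolding bij_betw_def
          by (metis (no_types, lifting) SigmaE UNIV_I imageE mem_Sigma_iff)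
        then show "w \<in> h ` V"
          by (auto simp: g_eq)
      qed
    qed
  qed
  moreover have "(x, y) \<in> push_set S A \<longleftrightarrow> (h x, h y) \<in> B" if "x \<in> V" "y \<in> V" for x y
    using g_arc[of "(x, x \<notin> S)" "(y, y \<notin> S)"] that
    by (simp add: g_eq anti_twin_arcs_iff push_set_def)
  ultimately have "isomorphic V (push_set S A) W B"
    by (auto simp: isomorphic_def is_iso_def)
  moreover have "push_related V A (push_set S A)"
    using assms(1) by (intro push_related_push_set) (auto simp: S_def)
  ultimately show ?thesis
    by (auto simp: push_equivalent_def)
qed

definition nbhd :: "('c \<times> 'c) set \<Rightarrow> 'c \<Rightarrow> 'c set \<times> 'c set" where
  "nbhd E p = ({q. (p, q) \<in> E}, {q. (q, p) \<in> E})"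

abbreviation isolated :: "('c \<times> 'c) set \<Rightarrow> 'c \<Rightarrow> bool" where
  "isolated E p \<equiv> nbhd E p = ({}, {})"

lemma arc_iff_if_same_nbhd:
  assumes "nbhd E p = nbhd E p'" and "nbhd E q = nbhd E q'"
  shows "(p, q) \<in> E \<longleftrightarrow> (p', q') \<in> E"
  using assms unfolding nbhd_def by blast

lemma nbhd_is_iso:
  assumes "is_iso U E U' E' f" and "E \<subseteq> U \<times> U" and "E' \<subseteq> U' \<times> U'" and "p \<in> U"
  shows "nbhd E' (f p) = map_prod ((`) f) ((`) f) (nbhd E p)"
proof -
  have bij: "bij_betw f U U'" and arc: "\<forall>x\<in>U. \<forall>y\<in>U. (x, y) \<in> E \<longleftrightarrow> (f x, f y) \<in> E'"
    using assms(1) by (auto simp: is_iso_def)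
  have onto: "\<exists>q\<in>U. q' = f q" if "(f p, q') \<in> E' \<or> (q', f p) \<in> E'" for q'
    using that assms(3) bij by (auto simp: bij_betw_def)
  have "{q'. (f p, q') \<in> E'} = f ` {q. (p, q) \<in> E}"
    using onto arc assms(2,4) by blast
  moreover have "{q'. (q', f p) \<in> E'} = f ` {q. (q, p) \<in> E}"
    using onto arc assms(2,4) by blast
  ultimately show ?thesis
    by (simp add: nbhd_def)
qed

lemma same_nbhd_is_iso:
  assumes "is_iso U E U' E' f" and "E \<subseteq> U \<times> U" and "E' \<subseteq> U' \<times> U'"
    and "p \<in> U" and "q \<in> U"
  shows "nbhd E' (f p) = nbhd E' (f q) \<longleftrightarrow> nbhd E p = nbhd E q"
proof -
  have "inj_on f U"
    using assms(1) by (simp add: is_iso_def bij_betw_def)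
  moreover have "fst (nbhd E r) \<subseteq> U" "snd (nbhd E r) \<subseteq> U" for r
    using assms(2) by (auto simp: nbhd_def)
  ultimately show ?thesis
    unfolding nbhd_is_iso[OF assms(1-4)] nbhd_is_iso[OF assms(1-3,5)]
    by (simp add: prod_eq_iff inj_on_image_eq_iff)
qed

lemma is_iso_if_same_nbhd:
  assumes "is_iso U E U' E' f" and "bij_betw g U U'"
    and "\<And>p. p \<in> U \<Longrightarrow> nbhd E' (g p) = nbhd E' (f p)"
  shows "is_iso U E U' E' g"
  using assms arc_iff_if_same_nbhd[of E'] unfolding is_iso_def by blast

lemma nbhd_anti_twin_twin:
  "nbhd (anti_twin_arcs A) (twin p) = prod.swap (nbhd (anti_twin_arcs A) p)"
  by (cases p) (auto simp: nbhd_def twin_def anti_twin_arcs_iff)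

lemma anti_twin_arcs_subset:
  assumes "oriented_graph V A"
  shows "anti_twin_arcs A \<subseteq> anti_twin_vertices V \<times> anti_twin_vertices V"
  using assms by (auto simp: anti_twin_arcs_def anti_twin_vertices_def oriented_graph_def)

lemma isolated_if_same_nbhd_as_twin:
  assumes "oriented_graph V A"
    and "nbhd (anti_twin_arcs A) (twin p) = nbhd (anti_twin_arcs A) p"
  shows "isolated (anti_twin_arcs A) p"
proof -
  have no_2_cycle: "(p, q) \<notin> anti_twin_arcs A \<or> (q, p) \<notin> anti_twin_arcs A" for q
    using assms(1) by (cases p; cases q) (simp add: anti_twin_arcs_iff oriented_graph_def)
  have "prod.swap (nbhd (anti_twin_arcs A) p) = nbhd (anti_twin_arcs A) p"
    using assms(2) by (simp only: nbhd_anti_twin_twin)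
  then have "fst (nbhd (anti_twin_arcs A) p) = snd (nbhd (anti_twin_arcs A) p)"
    by (metis fst_swap)
  then have "{q. (p, q) \<in> anti_twin_arcs A} = {q. (q, p) \<in> anti_twin_arcs A}"
    by (simp add: nbhd_def)
  with no_2_cycle show ?thesis
    unfolding nbhd_def by blast
qed

lemma isolated_anti_twin_iff:
  "isolated (anti_twin_arcs A) (x, b) \<longleftrightarrow> isolated (anti_twin_arcs A) (x, c)"
proof -
  have "isolated (anti_twin_arcs A) (x, \<not> b) \<longleftrightarrow> isolated (anti_twin_arcs A) (x, b)" for b
    using nbhd_anti_twin_twin[of A "(x, b)"]
    by (cases "nbhd (anti_twin_arcs A) (x, b)") (auto simp: twin_def)
  then show ?thesis
    by (cases "b = c") auto
qed

lemma isolated_anti_twin_if_same_nbhd: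
  assumes "nbhd (anti_twin_arcs A) (x, b) = nbhd (anti_twin_arcs A) (y, c)"
  shows "isolated (anti_twin_arcs A) (x, True) \<longleftrightarrow> isolated (anti_twin_arcs A) (y, True)"
  using assms isolated_anti_twin_iff[of A x True b] isolated_anti_twin_iff[of A y c True] by simp

lemma consistent_sides:
  fixes F :: "'a \<times> bool \<Rightarrow> 'c"
  assumes flip: "\<And>x b y c. F (x, b) = F (y, c) \<Longrightarrow> F (x, \<not> b) = F (y, \<not> c)"
  obtains s where "\<And>x b y c. F (x, b) \<noteq> F (x, \<not> b) \<Longrightarrow> F (x, b) = F (y, c) \<Longrightarrow>
                     b = s x \<longleftrightarrow> c = s y"
proof
  have flip_to: "F (x, b') = F (y, c = (b = b'))" if "F (x, b) = F (y, c)" for x b y c b'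
    using that flip[OF that] by (cases b; cases b') simp_all
  have class_indep: "(\<exists>d. F (x, b) = F (z, d)) \<longleftrightarrow> (\<exists>d. F (x, b') = F (z, d))" for x b b' z
    using flip_to[of x b z _ b'] flip_to[of x b' z _ b] by blast
  \<comment> \<open>r x represents the F-classes of (x, True) and (x, False); s x tells on which side
    of r x the vertex (x, True) lies.\<close>
  define r where "r x = (SOME r. \<exists>d. F (x, True) = F (r, d))" for x
  define s where "s x = (F (x, True) = F (r x, True))" for x
  have side: "s x \<longleftrightarrow> b = d" if "F (x, b) \<noteq> F (x, \<not> b)" "F (x, b) = F (r x, d)" for x b d
    using flip_to[OF that(2), of True] flip_to[OF that(2), of False] that(1)
    by (cases b; cases d) (auto simp: s_def)
  fix x b y c
  assume not_self: "F (x, b) \<noteq> F (x, \<not> b)" and same: "F (x, b) = F (y, c)"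
  have "(\<exists>d. F (x, True) = F (z, d)) \<longleftrightarrow> (\<exists>d. F (y, True) = F (z, d))" for z
    using class_indep[of x True z b] class_indep[of y True z c] same by simp
  then have r_eq: "r x = r y"
    by (simp add: r_def)
  have "\<exists>d. F (x, True) = F (r x, d)"
    unfolding r_def by (rule someI_ex) blast
  then obtain d0 where x_d0: "F (x, b) = F (r x, d0)"
    using class_indep by blast
  have "F (y, c) \<noteq> F (y, \<not> c)"
    using not_self same flip[OF same] by simp
  moreover have "F (y, c) = F (r y, d0)"
    using x_d0 same r_eq by simp
  ultimately have "s y \<longleftrightarrow> c = d0"
    by (rule side)
  with side[OF not_self x_d0] show "b = s x \<longleftrightarrow> c = s y"
    by auto
qed

context
  fixes V :: "'a set" and A :: "('a \<times> 'a) set" and W :: "'b set" and B :: "('b \<times> 'b) set"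
    and f :: "'a \<times> bool \<Rightarrow> 'b \<times> bool"
  assumes finite_V: "finite V" and finite_W: "finite W"
    and oriented_A: "oriented_graph V A" and oriented_B: "oriented_graph W B"
    and iso_f: "is_iso (anti_twin_vertices V) (anti_twin_arcs A)
                       (anti_twin_vertices W) (anti_twin_arcs B) f"
begin

lemma nbhd_iso_f:
  "p \<in> V \<times> UNIV \<Longrightarrow>
    nbhd (anti_twin_arcs B) (f p) = map_prod ((`) f) ((`) f) (nbhd (anti_twin_arcs A) p)"
  using nbhd_is_iso[OF iso_f anti_twin_arcs_subset[OF oriented_A] anti_twin_arcs_subset[OF oriented_B]]
  by (simp add: anti_twin_vertices_def)

lemma same_nbhd_iso_f:
  "p \<in> V \<times> UNIV \<Longrightarrow> q \<in> V \<times> UNIV \<Longrightarrow>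
    nbhd (anti_twin_arcs B) (f p) = nbhd (anti_twin_arcs B) (f q) \<longleftrightarrow>
    nbhd (anti_twin_arcs A) p = nbhd (anti_twin_arcs A) q"
  using same_nbhd_is_iso[OF iso_f anti_twin_arcs_subset[OF oriented_A] anti_twin_arcs_subset[OF oriented_B]]
  by (simp add: anti_twin_vertices_def)

lemma nbhd_iso_f_twin:
  assumes "p \<in> V \<times> UNIV"
  shows "nbhd (anti_twin_arcs B) (f (twin p)) = nbhd (anti_twin_arcs B) (twin (f p))"
proof -
  have "twin p \<in> V \<times> UNIV"
    using assms by (auto simp: twin_def)
  then show ?thesis
    unfolding nbhd_anti_twin_twin nbhd_iso_f[OF \<open>twin p \<in> V \<times> UNIV\<close>] nbhd_iso_f[OF assms]
    by (cases "nbhd (anti_twin_arcs A) p") simp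
qed

lemma isolated_iso_f:
  assumes "p \<in> V \<times> UNIV"
  shows "isolated (anti_twin_arcs B) (f p) \<longleftrightarrow> isolated (anti_twin_arcs A) p"
  using assms by (cases "nbhd (anti_twin_arcs A) p") (simp add: nbhd_iso_f)

lemma isolated_vertices_bij:
  obtains k where "bij_betw k {x \<in> V. isolated (anti_twin_arcs A) (x, True)}
                              {w \<in> W. isolated (anti_twin_arcs B) (w, True)}"
proof -
  let ?IV = "{x \<in> V. isolated (anti_twin_arcs A) (x, True)}"
  let ?IW = "{w \<in> W. isolated (anti_twin_arcs B) (w, True)}"
  have f_bij: "bij_betw f (V \<times> UNIV) (W \<times> UNIV)"
    using iso_f by (simp add: is_iso_def anti_twin_vertices_def)
  have IV: "?IV \<times> UNIV = {p \<in> V \<times> UNIV. isolated (anti_twin_arcs B) (f p)}"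
  proof (intro set_eqI)
    fix p :: "'a \<times> bool"
    show "p \<in> ?IV \<times> UNIV \<longleftrightarrow> p \<in> {p \<in> V \<times> UNIV. isolated (anti_twin_arcs B) (f p)}"
      using isolated_anti_twin_iff[of A "fst p" True "snd p"] isolated_iso_f[of p]
      by (cases p) auto
  qed
  have IW: "?IW \<times> UNIV = {q \<in> W \<times> UNIV. isolated (anti_twin_arcs B) q}"
  proof (intro set_eqI)
    fix q :: "'b \<times> bool"
    show "q \<in> ?IW \<times> UNIV \<longleftrightarrow> q \<in> {q \<in> W \<times> UNIV. isolated (anti_twin_arcs B) q}"
      using isolated_anti_twin_iff[of B "fst q" True "snd q"]
      by (cases q) auto
  qed
  have image: "f ` (?IV \<times> UNIV) = ?IW \<times> UNIV"
    unfolding IV IW bij_betw_imp_surj_on[OF f_bij, symmetric] by blast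
  have "inj_on f (?IV \<times> UNIV)"
    using bij_betw_imp_inj_on[OF f_bij] by (rule inj_on_subset) auto
  then have "card (?IV \<times> (UNIV :: bool set)) = card (?IW \<times> (UNIV :: bool set))"
    unfolding image[symmetric] by (rule card_image[symmetric])
  then have "card ?IV = card ?IW"
    by (simp add: card_cartesian_product)
  moreover have "finite ?IV" "finite ?IW"
    using finite_V finite_W by simp_all
  ultimately show ?thesis
    using finite_same_card_bij that by blast
qed

context
  fixes k :: "'a \<Rightarrow> 'b" and s :: "'a \<Rightarrow> bool"
  assumes k_bij: "bij_betw k {x \<in> V. isolated (anti_twin_arcs A) (x, True)}
                            {w \<in> W. isolated (anti_twin_arcs B) (w, True)}"
    and s_sides: "\<And>x b y c. nbhd (anti_twin_arcs A) (x, b) \<noteq> nbhd (anti_twin_arcs A) (x, \<not> b) \<Longrightarrow>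
                    nbhd (anti_twin_arcs A) (x, b) = nbhd (anti_twin_arcs A) (y, c) \<Longrightarrow>
                    b = s x \<longleftrightarrow> c = s y"
begin

definition twin_normalised :: "'a \<times> bool \<Rightarrow> 'b \<times> bool" where
  "twin_normalised p =
    (if isolated (anti_twin_arcs A) (fst p, True) then (k (fst p), snd p)
     else if snd p = s (fst p) then f p
     else twin (f (twin p)))"

lemma twin_normalised_twin: "twin_normalised (twin p) = twin (twin_normalised p)"
  by (cases p) (simp add: twin_normalised_def twin_def)

lemma twin_normalised_in:
  assumes "p \<in> V \<times> UNIV"
  shows "twin_normalised p \<in> W \<times> UNIV"
proof -
  have "f q \<in> W \<times> UNIV" if "q \<in> V \<times> UNIV" for q
    using that iso_f by (auto simp: is_iso_def anti_twin_vertices_def dest: bij_betw_apply)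
  moreover have "twin p \<in> V \<times> UNIV"
    using assms by (simp add: twin_def mem_Times_iff)
  moreover have "k (fst p) \<in> W" if "isolated (anti_twin_arcs A) (fst p, True)"
    using that assms bij_betw_apply[OF k_bij] by auto
  ultimately show ?thesis
    using assms by (auto simp: twin_normalised_def twin_def mem_Times_iff)
qed

lemma nbhd_twin_normalised:
  assumes p: "p \<in> V \<times> UNIV"
  shows "nbhd (anti_twin_arcs B) (twin_normalised p) = nbhd (anti_twin_arcs B) (f p)"
proof -
  obtain x b where x: "x \<in> V" and p_eq: "p = (x, b)"
    using p by auto
  consider (isolated_vertex) "isolated (anti_twin_arcs A) (x, True)"
    | (kept) "\<not> isolated (anti_twin_arcs A) (x, True)" "b = s x"
    | (flipped) "\<not> isolated (anti_twin_arcs A) (x, True)" "b \<noteq> s x"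
    by blast
  then show ?thesis
  proof cases
    case isolated_vertex
    then have "isolated (anti_twin_arcs B) (k x, True)"
      using x bij_betw_apply[OF k_bij] by auto
    then have "isolated (anti_twin_arcs B) (k x, b)"
      using isolated_anti_twin_iff[of B "k x" True b] by simp
    moreover have "isolated (anti_twin_arcs B) (f p)"
      using isolated_vertex isolated_anti_twin_iff[of A x True b] isolated_iso_f[OF p] p_eq by simp
    ultimately show ?thesis
      using isolated_vertex by (simp add: twin_normalised_def p_eq)
  next
    case kept
    then show ?thesis
      by (simp add: twin_normalised_def p_eq)
  next
    case flipped
    have "twin p \<in> V \<times> UNIV"
      using p by (simp add: twin_def mem_Times_iff)
    from nbhd_iso_f_twin[OF this] flipped show ?thesis
      by (simp add: twin_normalised_def p_eq twin_def)
  qed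
qed

lemma same_side_if_same_nbhd:
  assumes "\<not> isolated (anti_twin_arcs A) (x, True)"
    and "nbhd (anti_twin_arcs A) (x, b) = nbhd (anti_twin_arcs A) (y, c)"
  shows "b = s x \<longleftrightarrow> c = s y"
proof (rule s_sides[OF _ assms(2)])
  have "\<not> isolated (anti_twin_arcs A) (x, b)"
    using assms(1) isolated_anti_twin_iff[of A x True b] by simp
  then show "nbhd (anti_twin_arcs A) (x, b) \<noteq> nbhd (anti_twin_arcs A) (x, \<not> b)"
    using isolated_if_same_nbhd_as_twin[OF oriented_A, of "(x, b)"] by (auto simp: twin_def)
qed

lemma inj_on_twin_normalised: "inj_on twin_normalised (V \<times> UNIV)"
proof (rule inj_onI)
  fix p q
  assume p: "p \<in> V \<times> UNIV" and q: "q \<in> V \<times> UNIV" and eq: "twin_normalised p = twin_normalised q"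
  obtain x b y c where p_eq: "p = (x, b)" and q_eq: "q = (y, c)"
    by (cases p, cases q)
  have f_inj: "inj_on f (V \<times> UNIV)"
    using iso_f by (simp add: is_iso_def anti_twin_vertices_def bij_betw_def)
  have "nbhd (anti_twin_arcs B) (f p) = nbhd (anti_twin_arcs B) (f q)"
    using eq nbhd_twin_normalised[OF p] nbhd_twin_normalised[OF q] by simp
  then have same: "nbhd (anti_twin_arcs A) (x, b) = nbhd (anti_twin_arcs A) (y, c)"
    using same_nbhd_iso_f[OF p q] p_eq q_eq by simp
  show "p = q"
  proof (cases "isolated (anti_twin_arcs A) (x, True)")
    case True
    then have "isolated (anti_twin_arcs A) (y, True)"
      using isolated_anti_twin_if_same_nbhd[OF same] by simp
    with True eq have "k x = k y" "b = c"
      by (simp_all add: twin_normalised_def p_eq q_eq)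
    with True \<open>isolated (anti_twin_arcs A) (y, True)\<close> p q show ?thesis
      using bij_betw_imp_inj_on[OF k_bij] by (auto simp: p_eq q_eq dest: inj_onD)
  next
    case False
    then have y_not_isolated: "\<not> isolated (anti_twin_arcs A) (y, True)"
      using isolated_anti_twin_if_same_nbhd[OF same] by simp
    from False same have "b = s x \<longleftrightarrow> c = s y"
      by (rule same_side_if_same_nbhd)
    then consider "b = s x" "c = s y" | "b \<noteq> s x" "c \<noteq> s y"
      by blast
    then show ?thesis
    proof cases
      case 1
      with eq False y_not_isolated have "f p = f q"
        by (simp add: twin_normalised_def p_eq q_eq)
      then show ?thesis
        by (rule inj_onD[OF f_inj _ p q])
    next
      case 2
      with eq False y_not_isolated have "twin (f (twin p)) = twin (f (twin q))"
        by (simp add: twin_normalised_def p_eq q_eq)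
      then have "f (twin p) = f (twin q)"
        by (simp add: twin_def prod_eq_iff)
      moreover have "twin p \<in> V \<times> UNIV" and "twin q \<in> V \<times> UNIV"
        using p q by (simp_all add: twin_def mem_Times_iff)
      ultimately have "twin p = twin q"
        by (rule inj_onD[OF f_inj])
      then show ?thesis
        by (simp add: twin_def prod_eq_iff)
    qed
  qed
qed

lemma is_iso_twin_normalised:
  "is_iso (anti_twin_vertices V) (anti_twin_arcs A)
          (anti_twin_vertices W) (anti_twin_arcs B) twin_normalised"
proof -
  have f_bij: "bij_betw f (V \<times> UNIV) (W \<times> UNIV)"
    using iso_f by (simp add: is_iso_def anti_twin_vertices_def)
  have into: "twin_normalised ` (V \<times> UNIV) \<subseteq> W \<times> UNIV"
    using twin_normalised_in by blast
  have "card (twin_normalised ` (V \<times> UNIV)) = card (W \<times> (UNIV :: bool set))"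
    using card_image[OF inj_on_twin_normalised] bij_betw_same_card[OF f_bij] by simp
  then have "twin_normalised ` (V \<times> UNIV) = W \<times> UNIV"
    using card_subset_eq[OF _ into] finite_W by simp
  with inj_on_twin_normalised have bij: "bij_betw twin_normalised (V \<times> UNIV) (W \<times> UNIV)"
    by (rule bij_betw_imageI)
  show ?thesis
    unfolding anti_twin_vertices_def
    using is_iso_if_same_nbhd[OF iso_f[unfolded anti_twin_vertices_def] bij nbhd_twin_normalised] .
qed

end

lemma twin_compatible_iso_exists:
  "\<exists>g. is_iso (anti_twin_vertices V) (anti_twin_arcs A)
              (anti_twin_vertices W) (anti_twin_arcs B) g \<and> (\<forall>p. g (twin p) = twin (g p))"
proof -
  obtain k where k: "bij_betw k {x \<in> V. isolated (anti_twin_arcs A) (x, True)}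
                                {w \<in> W. isolated (anti_twin_arcs B) (w, True)}"
    using isolated_vertices_bij .
  have flip: "nbhd (anti_twin_arcs A) (x, \<not> b) = nbhd (anti_twin_arcs A) (y, \<not> c)"
    if "nbhd (anti_twin_arcs A) (x, b) = nbhd (anti_twin_arcs A) (y, c)" for x b y c
    using that nbhd_anti_twin_twin[of A "(x, b)"] nbhd_anti_twin_twin[of A "(y, c)"]
    by (simp add: twin_def)
  obtain s where s: "\<And>x b y c. nbhd (anti_twin_arcs A) (x, b) \<noteq> nbhd (anti_twin_arcs A) (x, \<not> b) \<Longrightarrow>
                    nbhd (anti_twin_arcs A) (x, b) = nbhd (anti_twin_arcs A) (y, c) \<Longrightarrow>
                    b = s x \<longleftrightarrow> c = s y"
    using consistent_sides[of "nbhd (anti_twin_arcs A)", OF flip] by blast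
  show ?thesis
    using is_iso_twin_normalised[where k = k and s = s, OF k s]
      twin_normalised_twin[where k = k and s = s, OF k s] by blast
qed

end

theorem theorem1:
  fixes V :: "'a set" and A :: "('a \<times> 'a) set"
    and W :: "'b set" and B :: "('b \<times> 'b) set"
  assumes "finite V" and "oriented_graph V A"
    and "finite W" and "oriented_graph W B"
  shows "push_equivalent V A W B \<longleftrightarrow>
         isomorphic (anti_twin_vertices V) (anti_twin_arcs A)
                    (anti_twin_vertices W) (anti_twin_arcs B)"
proof
  assume "push_equivalent V A W B"
  then show "isomorphic (anti_twin_vertices V) (anti_twin_arcs A)
                        (anti_twin_vertices W) (anti_twin_arcs B)"
    by (rule isomorphic_anti_twin_if_push_equivalent)
next
  assume "isomorphic (anti_twin_vertices V) (anti_twin_arcs A)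
                     (anti_twin_vertices W) (anti_twin_arcs B)"
  then obtain f where "is_iso (anti_twin_vertices V) (anti_twin_arcs A)
                                 (anti_twin_vertices W) (anti_twin_arcs B) f"
    by (auto simp: isomorphic_def)
  then obtain g where "is_iso (anti_twin_vertices V) (anti_twin_arcs A)
                              (anti_twin_vertices W) (anti_twin_arcs B) g"
    and "\<And>p. g (twin p) = twin (g p)"
    using twin_compatible_iso_exists[OF assms(1,3,2,4)] by blast
  with \<open>finite V\<close> show "push_equivalent V A W B"
    by (rule push_equivalent_if_twin_compatible_iso)
qed

end
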